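(* Let $B$ be a Horn program, $E^+,E^-$ finite sets of ground atoms, and $H_1,H_2,H_3\in\mathcal{H}_{D,C}$ hypotheses with $H_3$ a specialization of $H_1$. If $S_{ACC}(H_2,B,E^+,E^-) - S_{ACC}(H_1,B,E^+,E^-) > fp(H_1,B,E^-)$, then $S_{ACC}(H_2,B,E^+,E^-) > S_{ACC}(H_3,B,E^+,E^-)$.
   Context: A definite clause is a clause with exactly one positive literal. A hypothesis is a finite set of definite clauses; $\mathcal{H}_{D,C}$ denotes the hypothesis space of hypotheses consistent with a declaration bias $D$ and hypothesis constraints $C$ (only membership matters). $B$ is background knowledge, $E^+$ positive and $E^-$ negative examples. For a hypothesis $H$: $tp(H,B,E^+)=|\{e\in E^+ : H\cup B\models e\}|$, $tn(H,B,E^-)=|\{e\in E^- : H\cup B\not\models e\}|$, $fn(H,B,E^+)=|E^+|-tp(H,B,E^+)$, $fp(H,B,E^-)=|E^-|-tn(H,B,E^-)$, and $S_{ACC}(H,B,E^+,E^-)=tp(H,B,E^+)+tn(H,B,E^-)$. A clause $C_1$ subsumes a clause $C_2$ iff there is a substitution $\theta$ with $C_1\theta\subseteq C_2$. A clausal theory $T_1$ subsumes $T_2$ ($T_1\preceq T_2$) iff every clause of $T_2$ is subsumed by some clause of $T_1$. $T_1$ is a generalization of $T_2$ iff $T_1\preceq T_2$, and a specialization of $T_2$ iff $T_2\preceq T_1$. *)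

theory Defs
  imports Main
begin

datatype ('f,'v) trm = Var 'v | Fn 'f "('f,'v) trm list"

type_synonym ('p,'f,'v) atom = "'p \<times> ('f,'v) trm list"

datatype 'a lit = Pos 'a | Neg 'a

text \<open>A clause is a finite set of literals (read as their universally closed disjunction).\<close>
type_synonym ('p,'f,'v) clause = "('p,'f,'v) atom lit set"

primrec subst_trm :: "('v \<Rightarrow> ('f,'v) trm) \<Rightarrow> ('f,'v) trm \<Rightarrow> ('f,'v) trm" where
  "subst_trm \<sigma> (Var x) = \<sigma> x"
| "subst_trm \<sigma> (Fn f ts) = Fn f (map (subst_trm \<sigma>) ts)"

primrec vars_trm :: "('f,'v) trm \<Rightarrow> 'v set" where
  "vars_trm (Var x) = {x}"
| "vars_trm (Fn f ts) = \<Union> (set (map vars_trm ts))"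

definition ground_trm :: "('f,'v) trm \<Rightarrow> bool" where
  "ground_trm t \<longleftrightarrow> vars_trm t = {}"

definition ground_atom :: "('p,'f,'v) atom \<Rightarrow> bool" where
  "ground_atom a \<longleftrightarrow> (\<forall>t\<in>set (snd a). ground_trm t)"

definition subst_atom :: "('v \<Rightarrow> ('f,'v) trm) \<Rightarrow> ('p,'f,'v) atom \<Rightarrow> ('p,'f,'v) atom" where
  "subst_atom \<sigma> a = (fst a, map (subst_trm \<sigma>) (snd a))"

definition subst_lit :: "('v \<Rightarrow> ('f,'v) trm) \<Rightarrow> ('p,'f,'v) atom lit \<Rightarrow> ('p,'f,'v) atom lit" where
  "subst_lit \<sigma> l = map_lit (subst_atom \<sigma>) l"

definition subst_clause :: "('v \<Rightarrow> ('f,'v) trm) \<Rightarrow> ('p,'f,'v) clause \<Rightarrow> ('p,'f,'v) clause" where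
  "subst_clause \<sigma> C = subst_lit \<sigma> ` C"

primrec is_pos :: "'a lit \<Rightarrow> bool" where
  "is_pos (Pos a) = True"
| "is_pos (Neg a) = False"

definition definite_clause :: "('p,'f,'v) clause \<Rightarrow> bool" where
  "definite_clause C \<longleftrightarrow> finite C \<and> card {l\<in>C. is_pos l} = 1"

definition horn_clause :: "('p,'f,'v) clause \<Rightarrow> bool" where
  "horn_clause C \<longleftrightarrow> finite C \<and> card {l\<in>C. is_pos l} \<le> 1"

definition hypothesis :: "('p,'f,'v) clause set \<Rightarrow> bool" where
  "hypothesis H \<longleftrightarrow> finite H \<and> (\<forall>C\<in>H. definite_clause C)"

definition horn_program :: "('p,'f,'v) clause set \<Rightarrow> bool" where
  "horn_program B \<longleftrightarrow> finite B \<and> (\<forall>C\<in>B. horn_clause C)"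

definition ground_subst :: "('v \<Rightarrow> ('f,'v) trm) \<Rightarrow> bool" where
  "ground_subst \<sigma> \<longleftrightarrow> (\<forall>x. ground_trm (\<sigma> x))"

primrec lit_true :: "('p,'f,'v) atom set \<Rightarrow> ('p,'f,'v) atom lit \<Rightarrow> bool" where
  "lit_true I (Pos a) = (a \<in> I)"
| "lit_true I (Neg a) = (a \<notin> I)"

definition clause_true :: "('p,'f,'v) atom set \<Rightarrow> ('p,'f,'v) clause \<Rightarrow> bool" where
  "clause_true I C \<longleftrightarrow> (\<forall>\<sigma>. ground_subst \<sigma> \<longrightarrow> (\<exists>l\<in>C. lit_true I (subst_lit \<sigma> l)))"

definition herbrand_model :: "('p,'f,'v) atom set \<Rightarrow> ('p,'f,'v) clause set \<Rightarrow> bool" where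
  "herbrand_model I T \<longleftrightarrow> (\<forall>a\<in>I. ground_atom a) \<and> (\<forall>C\<in>T. clause_true I C)"

definition entails :: "('p,'f,'v) clause set \<Rightarrow> ('p,'f,'v) atom \<Rightarrow> bool" where
  "entails T e \<longleftrightarrow> (\<forall>I. herbrand_model I T \<longrightarrow> e \<in> I)"

definition tp :: "('p,'f,'v) clause set \<Rightarrow> ('p,'f,'v) clause set \<Rightarrow> ('p,'f,'v) atom set \<Rightarrow> nat" where
  "tp H B Ep = card {e\<in>Ep. entails (H \<union> B) e}"

definition tn :: "('p,'f,'v) clause set \<Rightarrow> ('p,'f,'v) clause set \<Rightarrow> ('p,'f,'v) atom set \<Rightarrow> nat" where
  "tn H B En = card {e\<in>En. \<not> entails (H \<union> B) e}"

definition fn :: "('p,'f,'v) clause set \<Rightarrow> ('p,'f,'v) clause set \<Rightarrow> ('p,'f,'v) atom set \<Rightarrow> nat" where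
  "fn H B Ep = card Ep - tp H B Ep"

definition fp :: "('p,'f,'v) clause set \<Rightarrow> ('p,'f,'v) clause set \<Rightarrow> ('p,'f,'v) atom set \<Rightarrow> nat" where
  "fp H B En = card En - tn H B En"

definition S_acc :: "('p,'f,'v) clause set \<Rightarrow> ('p,'f,'v) clause set \<Rightarrow> ('p,'f,'v) atom set \<Rightarrow> ('p,'f,'v) atom set \<Rightarrow> nat" where
  "S_acc H B Ep En = tp H B Ep + tn H B En"

definition clause_subsumes :: "('p,'f,'v) clause \<Rightarrow> ('p,'f,'v) clause \<Rightarrow> bool" where
  "clause_subsumes C1 C2 \<longleftrightarrow> (\<exists>\<theta>. subst_clause \<theta> C1 \<subseteq> C2)"

definition theory_subsumes :: "('p,'f,'v) clause set \<Rightarrow> ('p,'f,'v) clause set \<Rightarrow> bool" where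
  "theory_subsumes T1 T2 \<longleftrightarrow> (\<forall>C2\<in>T2. \<exists>C1\<in>T1. clause_subsumes C1 C2)"

definition generalization :: "('p,'f,'v) clause set \<Rightarrow> ('p,'f,'v) clause set \<Rightarrow> bool" where
  "generalization T1 T2 \<longleftrightarrow> theory_subsumes T1 T2"

definition specialization :: "('p,'f,'v) clause set \<Rightarrow> ('p,'f,'v) clause set \<Rightarrow> bool" where
  "specialization T1 T2 \<longleftrightarrow> theory_subsumes T2 T1"

end

theory Submission
  imports Defs
begin

text \<open>If \<open>H\<^sub>1 \<preceq> H\<^sub>3\<close>, every Herbrand model of \<open>H\<^sub>1 \<union> B\<close> is one of \<open>H\<^sub>3 \<union> B\<close>, so \<open>H\<^sub>3\<close> covers
  no positive example that \<open>H\<^sub>1\<close> misses. Since \<open>H\<^sub>3\<close> can gain at most the \<open>fp(H\<^sub>1)\<close> negative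
  examples that \<open>H\<^sub>1\<close> wrongly covers, \<open>S\<^sub>A\<^sub>C\<^sub>C(H\<^sub>3) \<le> S\<^sub>A\<^sub>C\<^sub>C(H\<^sub>1) + fp(H\<^sub>1) < S\<^sub>A\<^sub>C\<^sub>C(H\<^sub>2)\<close>.\<close>

lemma subst_trm_Var [simp]: "subst_trm Var t = t"
  by (induction t) (auto simp: map_idI)

lemma subst_trm_subst_trm:
  "subst_trm \<sigma> (subst_trm \<theta> t) = subst_trm (\<lambda>x. subst_trm \<sigma> (\<theta> x)) t"
  by (induction t) auto

lemma subst_lit_subst_lit:
  "subst_lit \<sigma> (subst_lit \<theta> l) = subst_lit (\<lambda>x. subst_trm \<sigma> (\<theta> x)) l"
  by (cases l) (auto simp: subst_lit_def subst_atom_def subst_trm_subst_trm)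

lemma ground_trm_subst_trm: "ground_subst \<sigma> \<Longrightarrow> ground_trm (subst_trm \<sigma> t)"
  by (induction t) (auto simp: ground_subst_def ground_trm_def)

lemma ground_subst_comp:
  "ground_subst \<sigma> \<Longrightarrow> ground_subst (\<lambda>x. subst_trm \<sigma> (\<theta> x))"
  by (simp add: ground_subst_def ground_trm_subst_trm)

lemma subst_lit_Var [simp]: "subst_lit Var l = l"
  by (cases l) (simp_all add: subst_lit_def subst_atom_def map_idI)

lemma clause_subsumes_refl: "clause_subsumes C C"
  unfolding clause_subsumes_def subst_clause_def by (rule exI[of _ Var]) simp

lemma theory_subsumes_refl: "theory_subsumes T T"
  using clause_subsumes_refl by (auto simp: theory_subsumes_def)

lemma theory_subsumes_Un:
  "theory_subsumes T1 T2 \<Longrightarrow> theory_subsumes U1 U2 \<Longrightarrow> theory_subsumes (T1 \<union> U1) (T2 \<union> U2)"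
  by (auto simp: theory_subsumes_def)

lemma clause_true_subsumed:
  fixes C1 C2 :: "('p,'f,'v) clause"
  assumes "clause_true I C1" and "clause_subsumes C1 C2"
  shows "clause_true I C2"
  unfolding clause_true_def
proof (intro allI impI)
  fix \<sigma> :: "'v \<Rightarrow> ('f,'v) trm"
  assume "ground_subst \<sigma>"
  obtain \<theta> :: "'v \<Rightarrow> ('f,'v) trm" where \<theta>: "subst_clause \<theta> C1 \<subseteq> C2"
    using assms(2) clause_subsumes_def by blast
  obtain l where "l \<in> C1" and "lit_true I (subst_lit (\<lambda>x. subst_trm \<sigma> (\<theta> x)) l)"
    using assms(1) ground_subst_comp[OF \<open>ground_subst \<sigma>\<close>] unfolding clause_true_def by blast
  moreover have "subst_lit \<theta> l \<in> C2"
    using \<theta> \<open>l \<in> C1\<close> by (auto simp: subst_clause_def)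
  ultimately show "\<exists>l\<in>C2. lit_true I (subst_lit \<sigma> l)"
    by (metis subst_lit_subst_lit)
qed

lemma herbrand_model_subsumed:
  "herbrand_model I T1 \<Longrightarrow> theory_subsumes T1 T2 \<Longrightarrow> herbrand_model I T2"
  using clause_true_subsumed unfolding herbrand_model_def theory_subsumes_def by blast

lemma entails_subsumed: "theory_subsumes T1 T2 \<Longrightarrow> entails T2 e \<Longrightarrow> entails T1 e"
  using herbrand_model_subsumed unfolding entails_def by blast

lemma tp_specialization_le:
  assumes "specialization H' H" and "finite Ep"
  shows "tp H' B Ep \<le> tp H B Ep"
proof -
  have "theory_subsumes (H \<union> B) (H' \<union> B)"
    using assms(1) theory_subsumes_Un theory_subsumes_refl specialization_def by blast
  then show ?thesis
    unfolding tp_def using assms(2) entails_subsumed by (intro card_mono) auto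
qed

lemma tn_le_card: "finite En \<Longrightarrow> tn H B En \<le> card En"
  unfolding tn_def by (intro card_mono) auto

lemma S_acc_specialization_le:
  assumes "specialization H' H" and "finite Ep" and "finite En"
  shows "S_acc H' B Ep En \<le> S_acc H B Ep En + fp H B En"
  using tp_specialization_le[OF assms(1,2), of B] tn_le_card[OF assms(3), of H B]
    tn_le_card[OF assms(3), of H' B]
  unfolding S_acc_def fp_def by linarith

theorem proposition4p4:
  fixes Hs :: "('p,'f,'v) clause set set"
    and B H1 H2 H3 :: "('p,'f,'v) clause set"
    and Ep En :: "('p,'f,'v) atom set"
  assumes "horn_program B"
    and "finite Ep" and "\<forall>e\<in>Ep. ground_atom e"
    and "finite En" and "\<forall>e\<in>En. ground_atom e"
    and "\<forall>H\<in>Hs. hypothesis H"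
    and "H1 \<in> Hs" and "H2 \<in> Hs" and "H3 \<in> Hs"
    and "specialization H3 H1"
    and "int (S_acc H2 B Ep En) - int (S_acc H1 B Ep En) > int (fp H1 B En)"
  shows "S_acc H2 B Ep En > S_acc H3 B Ep En"
  using S_acc_specialization_le[OF assms(10,2,4), of B] assms(11) by linarith

end
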